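(* Let $\Gamma=(V,E)$ be a reflexive locally finite $k$-separable graph and let $X$ and $Y$ be $k$-fragments of $\Gamma$. Then $\partial^-(\nabla(X))=\partial(X)$, $\nabla^-(\nabla(X))=X$, and $X\subseteq Y$ if and only if $\nabla(Y)\subseteq\nabla(X)$. In particular, $\nabla(X)$ is a reverse-$k$-semi-fragment of $\Gamma$.
   Context: A graph is a pair $\Gamma=(V,E)$ with $E\subseteq V\times V$. For $x\in V$, $\Gamma(x)=\{y:(x,y)\in E\}$, and $\Gamma(X)=\bigcup_{x\in X}\Gamma(x)$. The reverse graph is $\Gamma^-=(V,E^-)$ with $E^-=\{(x,y):(y,x)\in E\}$. $\Gamma$ is reflexive if $(x,x)\in E$ for all $x$, locally finite if $\Gamma(x),\Gamma^-(x)$ are finite for all $x$. $\partial(X)=\Gamma(X)\setminus X$, $\nabla(X)=V\setminus\Gamma(X)$, and $\partial^-,\nabla^-$ are the same operators for $\Gamma^-$. $\Gamma$ is $k$-separable if there is a finite $X$ with $|X|\ge k$ and $|\nabla(X)|\ge k$; then $\kappa_k(\Gamma)=\min\{|\partial(X)|: X\text{ finite}, |X|\ge k, |\nabla(X)|\ge k\}$. A $k$-fragment is a finite $X$ with $|X|\ge k$, $|\nabla(X)|\ge k$, $|\partial(X)|=\kappa_k(\Gamma)$. A reverse $k$-fragment is a $k$-fragment of $\Gamma^-$. A $k$-semi-fragment of $\Gamma$ is a set $X$ that is either a $k$-fragment of $\Gamma$ or such that $\nabla(X)$ is a $k$-fragment of $\Gamma^-$; a reverse-$k$-semi-fragment of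 $\Gamma$ is a $k$-semi-fragment of $\Gamma^-$. *)

theory Defs
  imports Main
begin

text \<open>A graph is a pair (V, E) with E a subset of V \<times> V.  All operators are taken
relative to the vertex set V.  The reverse graph is (V, converse E).\<close>

definition graph :: "'a set \<Rightarrow> ('a \<times> 'a) set \<Rightarrow> bool" where
  "graph V E \<longleftrightarrow> E \<subseteq> V \<times> V"

definition nbr :: "('a \<times> 'a) set \<Rightarrow> 'a \<Rightarrow> 'a set" where
  "nbr E x = {y. (x, y) \<in> E}"

definition Nbr :: "('a \<times> 'a) set \<Rightarrow> 'a set \<Rightarrow> 'a set" where
  "Nbr E X = (\<Union>x\<in>X. nbr E x)"

definition bdry :: "('a \<times> 'a) set \<Rightarrow> 'a set \<Rightarrow> 'a set" where
  "bdry E X = Nbr E X - X"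

definition nabla :: "'a set \<Rightarrow> ('a \<times> 'a) set \<Rightarrow> 'a set \<Rightarrow> 'a set" where
  "nabla V E X = V - Nbr E X"

definition reflexive_graph :: "'a set \<Rightarrow> ('a \<times> 'a) set \<Rightarrow> bool" where
  "reflexive_graph V E \<longleftrightarrow> (\<forall>x\<in>V. (x, x) \<in> E)"

definition locally_finite :: "'a set \<Rightarrow> ('a \<times> 'a) set \<Rightarrow> bool" where
  "locally_finite V E \<longleftrightarrow> (\<forall>x\<in>V. finite (nbr E x) \<and> finite (nbr (converse E) x))"

text \<open>|A| \<ge> k, where an infinite set has cardinality \<ge> every k.\<close>
definition card_ge :: "'a set \<Rightarrow> nat \<Rightarrow> bool" where
  "card_ge A k \<longleftrightarrow> infinite A \<or> k \<le> card A"

definition admissible :: "'a set \<Rightarrow> ('a \<times> 'a) set \<Rightarrow> nat \<Rightarrow> 'a set \<Rightarrow> bool" where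
  "admissible V E k X \<longleftrightarrow> X \<subseteq> V \<and> finite X \<and> k \<le> card X \<and> card_ge (nabla V E X) k"

definition k_separable :: "'a set \<Rightarrow> ('a \<times> 'a) set \<Rightarrow> nat \<Rightarrow> bool" where
  "k_separable V E k \<longleftrightarrow> (\<exists>X. admissible V E k X)"

definition kappa :: "'a set \<Rightarrow> ('a \<times> 'a) set \<Rightarrow> nat \<Rightarrow> nat" where
  "kappa V E k = (LEAST n. \<exists>X. admissible V E k X \<and> n = card (bdry E X))"

definition fragment :: "'a set \<Rightarrow> ('a \<times> 'a) set \<Rightarrow> nat \<Rightarrow> 'a set \<Rightarrow> bool" where
  "fragment V E k X \<longleftrightarrow> admissible V E k X \<and> card (bdry E X) = kappa V E k"

definition semi_fragment :: "'a set \<Rightarrow> ('a \<times> 'a) set \<Rightarrow> nat \<Rightarrow> 'a set \<Rightarrow> bool" where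
  "semi_fragment V E k X \<longleftrightarrow> fragment V E k X \<or> fragment V (converse E) k (nabla V E X)"

definition rev_semi_fragment :: "'a set \<Rightarrow> ('a \<times> 'a) set \<Rightarrow> nat \<Rightarrow> 'a set \<Rightarrow> bool" where
  "rev_semi_fragment V E k X \<longleftrightarrow> semi_fragment V (converse E) k X"

end

theory Submission
  imports Defs
begin

(* A vertex y of the boundary of a k-fragment X has an out-neighbour in nabla(X):
   otherwise X + {y} would still be admissible with a strictly smaller boundary,
   contradicting the minimality of kappa_k.  Hence every vertex of bdry(X) lies in
   the reverse boundary of nabla(X), and the opposite inclusion holds in any graph.
   In a reflexive graph the reverse neighbourhood of nabla(X) is then
   nabla(X) + bdry(X), whose complement is X; this double-complement formula turns
   an inclusion nabla(Y) <= nabla(X) back into X <= Y. *)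

lemma Nbr_mono: "X \<subseteq> Y \<Longrightarrow> Nbr E X \<subseteq> Nbr E Y"
  by (auto simp: Nbr_def)

lemma nabla_antimono: "X \<subseteq> Y \<Longrightarrow> nabla V E Y \<subseteq> nabla V E X"
  using Nbr_mono[of X Y E] by (auto simp: nabla_def)

lemma Nbr_subset_vertices: "graph V E \<Longrightarrow> Nbr E X \<subseteq> V"
  by (auto simp: graph_def Nbr_def nbr_def)

lemma subset_Nbr_if_reflexive:
  "reflexive_graph V E \<Longrightarrow> X \<subseteq> V \<Longrightarrow> X \<subseteq> Nbr E X"
  by (auto simp: reflexive_graph_def Nbr_def nbr_def)

lemma finite_bdry:
  assumes "locally_finite V E" "X \<subseteq> V" "finite X"
  shows "finite (bdry E X)"
proof -
  have "finite (Nbr E X)"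
    using assms unfolding locally_finite_def Nbr_def by auto
  then show ?thesis by (simp add: bdry_def)
qed

lemma kappa_le_card_bdry: "admissible V E k X \<Longrightarrow> kappa V E k \<le> card (bdry E X)"
  unfolding kappa_def by (rule Least_le) blast

lemma bdry_converse_nabla_subset:
  "graph V E \<Longrightarrow> bdry (converse E) (nabla V E X) \<subseteq> bdry E X"
  by (auto simp: graph_def bdry_def nabla_def Nbr_def nbr_def)

lemma fragment_bdry_has_nabla_nbr:
  assumes "graph V E" "locally_finite V E" "fragment V E k X" "y \<in> bdry E X"
  shows "\<exists>z \<in> nabla V E X. (y, z) \<in> E"
proof (rule ccontr)
  assume "\<not> (\<exists>z \<in> nabla V E X. (y, z) \<in> E)"
  then have "nbr E y \<subseteq> Nbr E X"
    using assms(1) by (auto simp: graph_def nabla_def nbr_def)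
  then have Nbr_insert: "Nbr E (insert y X) = Nbr E X"
    by (auto simp: Nbr_def)
  have X: "X \<subseteq> V" "finite X" "k \<le> card X" "card_ge (nabla V E X) k"
    and X_min: "card (bdry E X) = kappa V E k"
    using assms(3) by (auto simp: fragment_def admissible_def)
  have y: "y \<in> V" "y \<notin> X"
    using assms(4) Nbr_subset_vertices[OF assms(1)] by (auto simp: bdry_def)
  have "admissible V E k (insert y X)"
    using X y Nbr_insert by (auto simp: admissible_def nabla_def)
  then have "kappa V E k \<le> card (bdry E (insert y X))"
    by (rule kappa_le_card_bdry)
  also have "bdry E (insert y X) = bdry E X - {y}"
    using Nbr_insert by (auto simp: bdry_def)
  also have "card \<dots> < card (bdry E X)"
    using finite_bdry[OF assms(2) X(1,2)] assms(4) by (rule card_Diff1_less)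
  finally show False
    using X_min by simp
qed

lemma fragment_bdry_converse_nabla:
  assumes "graph V E" "locally_finite V E" "fragment V E k X"
  shows "bdry (converse E) (nabla V E X) = bdry E X"
proof
  show "bdry (converse E) (nabla V E X) \<subseteq> bdry E X"
    using assms(1) by (rule bdry_converse_nabla_subset)
  show "bdry E X \<subseteq> bdry (converse E) (nabla V E X)"
  proof
    fix y assume y: "y \<in> bdry E X"
    then obtain z where "z \<in> nabla V E X" "(y, z) \<in> E"
      using fragment_bdry_has_nabla_nbr[OF assms] by blast
    moreover have "y \<notin> nabla V E X"
      using y by (auto simp: bdry_def nabla_def)
    ultimately show "y \<in> bdry (converse E) (nabla V E X)"
      by (auto simp: bdry_def Nbr_def nbr_def)
  qed
qed

lemma nabla_converse_nabla:
  assumes "graph V E" "reflexive_graph V E" "X \<subseteq> V"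
    and "bdry (converse E) (nabla V E X) = bdry E X"
  shows "nabla V (converse E) (nabla V E X) = X"
proof -
  have "Nbr (converse E) (nabla V E X) = nabla V E X \<union> bdry E X"
    using assms(2,4) by (auto simp: reflexive_graph_def bdry_def nabla_def Nbr_def nbr_def)
  then show ?thesis
    using Nbr_subset_vertices[OF assms(1)] subset_Nbr_if_reflexive[OF assms(2,3)] assms(3)
    by (auto simp: nabla_def bdry_def)
qed

lemma fragment_nabla_converse_nabla:
  assumes "graph V E" "reflexive_graph V E" "locally_finite V E" "fragment V E k X"
  shows "nabla V (converse E) (nabla V E X) = X"
  using assms(4) by (intro nabla_converse_nabla assms(1,2) fragment_bdry_converse_nabla[OF assms(1,3,4)])
    (simp add: fragment_def admissible_def)

lemma subset_iff_nabla_subset: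
  assumes "nabla V (converse E) (nabla V E X) = X" "nabla V (converse E) (nabla V E Y) = Y"
  shows "X \<subseteq> Y \<longleftrightarrow> nabla V E Y \<subseteq> nabla V E X"
  using nabla_antimono[of X Y V E] nabla_antimono[of "nabla V E Y" "nabla V E X" V "converse E"]
  by (auto simp: assms)

lemma rev_semi_fragment_nabla_if_fragment:
  assumes "nabla V (converse E) (nabla V E X) = X" "fragment V E k X"
  shows "rev_semi_fragment V E k (nabla V E X)"
  using assms by (simp add: rev_semi_fragment_def semi_fragment_def)

theorem lemma3p2:
  fixes V :: "'a set" and E :: "('a \<times> 'a) set" and k :: nat and X Y :: "'a set"
  assumes "graph V E"
    and "reflexive_graph V E"
    and "locally_finite V E"
    and "k_separable V E k"
    and "fragment V E k X"
    and "fragment V E k Y"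
  shows "bdry (converse E) (nabla V E X) = bdry E X
       \<and> nabla V (converse E) (nabla V E X) = X
       \<and> (X \<subseteq> Y \<longleftrightarrow> nabla V E Y \<subseteq> nabla V E X)
       \<and> rev_semi_fragment V E k (nabla V E X)"
proof -
  have X: "nabla V (converse E) (nabla V E X) = X"
    using assms(1-3,5) by (rule fragment_nabla_converse_nabla)
  have Y: "nabla V (converse E) (nabla V E Y) = Y"
    using assms(1-3,6) by (rule fragment_nabla_converse_nabla)
  show ?thesis
    using fragment_bdry_converse_nabla[OF assms(1,3,5)] X subset_iff_nabla_subset[OF X Y]
      rev_semi_fragment_nabla_if_fragment[OF X assms(5)]
    by blast
qed

end
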